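(* Let $p,q\in(0,1)$ and $N\ge1$. For all $x,y\in\mathbb{N}$ with $\min(x,y)\ge N$, $$\mathbb{P}^{(x,y)}_{p,q}(\tau<+\infty)\le\mathbb{P}^{(1,1)}_{p,q}(\tau<+\infty)^N.$$
   Context: Cooperative model: for $p,q\in(0,1)$, a Markov chain $(X_n,Y_n)_{n\ge0}$ on $\mathbb{N}^2$ whose transition law from state $(x,y)$ is $\mu_{(x,y)}=\mathrm{Bin}(2,q)^{*(x+y)}\otimes\mathrm{Bin}(2,p)^{*\min(x,y)}$, i.e. given the past, $X_{n+1}\sim\mathrm{Bin}(2(X_n+Y_n),q)$ and $Y_{n+1}\sim\mathrm{Bin}(2\min(X_n,Y_n),p)$ are independent. $\mathbb{P}^{(x,y)}_{p,q}$ denotes the law of this process started from $(x,y)$. $Z_n=\min(X_n,Y_n)$ and $\tau=\inf\{n\ge0: Z_n=0\}$. *)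

theory Defs
  imports "HOL-Probability.Probability"
begin

definition coop_trans :: "real \<Rightarrow> real \<Rightarrow> nat \<times> nat \<Rightarrow> (nat \<times> nat) pmf" where
  "coop_trans p q s =
     pair_pmf (binomial_pmf (2 * (fst s + snd s)) q) (binomial_pmf (2 * min (fst s) (snd s)) p)"

fun coop_path :: "real \<Rightarrow> real \<Rightarrow> nat \<Rightarrow> nat \<times> nat \<Rightarrow> (nat \<times> nat) list pmf" where
  "coop_path p q 0 s = return_pmf [s]"
| "coop_path p q (Suc n) s =
     bind_pmf (coop_trans p q s) (\<lambda>t. map_pmf (Cons s) (coop_path p q n t))"

text \<open>P^{s}(tau \<le> n): some state among the first n+1 has min(X,Y) = 0.\<close>
definition coop_tau_le :: "real \<Rightarrow> real \<Rightarrow> nat \<times> nat \<Rightarrow> nat \<Rightarrow> real" where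
  "coop_tau_le p q s n =
     measure_pmf.prob (coop_path p q n s) {xs. \<exists>z \<in> set xs. min (fst z) (snd z) = 0}"

text \<open>P^{s}(tau < \<infinity>) = sup_n P^{s}(tau \<le> n) (continuity from below).\<close>
definition coop_tau_finite :: "real \<Rightarrow> real \<Rightarrow> nat \<times> nat \<Rightarrow> real" where
  "coop_tau_finite p q s = (SUP n. coop_tau_le p q s n)"

end

theory Submission
  imports Defs
begin

text \<open>The probability of absorption by time \<open>n\<close> is submultiplicative: if
  \<open>s\<^sub>1 + s\<^sub>2 \<le> s\<close> componentwise, then \<open>P(s, n) \<le> P(s\<^sub>1, n) P(s\<^sub>2, n)\<close>, where
  \<open>P(s, n)\<close> is the probability of \<open>\<tau> \<le> n\<close> started from \<open>s\<close>. The proof is by induction on \<open>n\<close>: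
  the binomial offspring of \<open>s\<close> is a sum of independent offspring of \<open>s\<^sub>1\<close>, of \<open>s\<^sub>2\<close> and of a
  surplus; the surplus only delays absorption since \<open>P(\<cdot>, n)\<close> is antitone, and a sum of two
  states is absorbed only if both summands are. Iterating along the diagonal gives
  \<open>P((x, y), n) \<le> P((1, 1), n)\<^sup>N\<close>, and letting \<open>n \<rightarrow> \<infinity>\<close> gives the theorem.\<close>

lemma binomial_pmf_add:
  assumes "r \<in> {0..1}"
  shows "binomial_pmf (m + k) r =
    map_pmf (\<lambda>(u, v). u + v) (pair_pmf (binomial_pmf m r) (binomial_pmf k r))"
proof (induction m)
  case 0
  then show ?case
    using assms by (simp add: binomial_pmf_0 pair_return_pmf1 pmf.map_comp o_def)
next
  case (Suc m)
  then show ?case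
    using assms by (simp add: binomial_pmf_Suc pair_pmf_def map_pmf_def bind_assoc_pmf
        bind_return_pmf add.assoc)
qed

lemma nn_integral_pmf_commute:
  fixes A :: "'a pmf" and B :: "'b pmf"
  shows "(\<integral>\<^sup>+x. \<integral>\<^sup>+y. f x y \<partial>B \<partial>A) = (\<integral>\<^sup>+y. \<integral>\<^sup>+x. f x y \<partial>A \<partial>B)"
proof -
  have "(\<integral>\<^sup>+x. \<integral>\<^sup>+y. f x y \<partial>B \<partial>A) = (\<integral>\<^sup>+z. f (fst z) (snd z) \<partial>pair_pmf A B)"
    by (simp add: nn_integral_pair_pmf')
  also have "\<dots> = (\<integral>\<^sup>+z. f (snd z) (fst z) \<partial>pair_pmf B A)"
    by (subst pair_commute_pmf) (simp add: case_prod_beta)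
  also have "\<dots> = (\<integral>\<^sup>+y. \<integral>\<^sup>+x. f x y \<partial>A \<partial>B)"
    by (simp add: nn_integral_pair_pmf')
  finally show ?thesis .
qed

lemma nn_integral_binomial_pmf_add:
  assumes "r \<in> {0..1}"
  shows "(\<integral>\<^sup>+x. g x \<partial>binomial_pmf (m + k) r) =
    (\<integral>\<^sup>+u. \<integral>\<^sup>+v. g (u + v) \<partial>binomial_pmf k r \<partial>binomial_pmf m r)"
  by (simp add: binomial_pmf_add[OF assms] nn_integral_pair_pmf')

lemma nn_integral_binomial_pair_add:
  assumes "p \<in> {0..1}" "q \<in> {0..1}"
  shows "(\<integral>\<^sup>+t. h t \<partial>pair_pmf (binomial_pmf (a\<^sub>1 + a\<^sub>2) q) (binomial_pmf (b\<^sub>1 + b\<^sub>2) p)) =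
    (\<integral>\<^sup>+t\<^sub>1. \<integral>\<^sup>+t\<^sub>2. h (t\<^sub>1 + t\<^sub>2) \<partial>pair_pmf (binomial_pmf a\<^sub>2 q) (binomial_pmf b\<^sub>2 p)
       \<partial>pair_pmf (binomial_pmf a\<^sub>1 q) (binomial_pmf b\<^sub>1 p))"
proof -
  have "(\<integral>\<^sup>+t. h t \<partial>pair_pmf (binomial_pmf (a\<^sub>1 + a\<^sub>2) q) (binomial_pmf (b\<^sub>1 + b\<^sub>2) p)) =
    (\<integral>\<^sup>+x\<^sub>1. \<integral>\<^sup>+x\<^sub>2. \<integral>\<^sup>+y\<^sub>1. \<integral>\<^sup>+y\<^sub>2. h (x\<^sub>1 + x\<^sub>2, y\<^sub>1 + y\<^sub>2)
       \<partial>binomial_pmf b\<^sub>2 p \<partial>binomial_pmf b\<^sub>1 p \<partial>binomial_pmf a\<^sub>2 q \<partial>binomial_pmf a\<^sub>1 q)"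
    using assms by (simp add: nn_integral_pair_pmf' nn_integral_binomial_pmf_add)
  also have "\<dots> = (\<integral>\<^sup>+x\<^sub>1. \<integral>\<^sup>+y\<^sub>1. \<integral>\<^sup>+x\<^sub>2. \<integral>\<^sup>+y\<^sub>2. h (x\<^sub>1 + x\<^sub>2, y\<^sub>1 + y\<^sub>2)
       \<partial>binomial_pmf b\<^sub>2 p \<partial>binomial_pmf a\<^sub>2 q \<partial>binomial_pmf b\<^sub>1 p \<partial>binomial_pmf a\<^sub>1 q)"
    by (intro nn_integral_cong nn_integral_pmf_commute)
  finally show ?thesis
    by (simp add: nn_integral_pair_pmf')
qed

lemma nn_integral_binomial_pair_antimono:
  assumes "antimono h" "p \<in> {0..1}" "q \<in> {0..1}" "a \<le> a'" "b \<le> b'"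
  shows "(\<integral>\<^sup>+t. h t \<partial>pair_pmf (binomial_pmf a' q) (binomial_pmf b' p)) \<le>
    (\<integral>\<^sup>+t. h t \<partial>pair_pmf (binomial_pmf a q) (binomial_pmf b p))"
proof -
  obtain c d where a': "a' = a + c" and b': "b' = b + d"
    using assms(4,5) le_Suc_ex by metis
  have "(\<integral>\<^sup>+t. h t \<partial>pair_pmf (binomial_pmf a' q) (binomial_pmf b' p)) =
    (\<integral>\<^sup>+t. \<integral>\<^sup>+u. h (t + u) \<partial>pair_pmf (binomial_pmf c q) (binomial_pmf d p)
       \<partial>pair_pmf (binomial_pmf a q) (binomial_pmf b p))"
    unfolding a' b' using assms(2,3) by (rule nn_integral_binomial_pair_add)
  also have "\<dots> \<le> (\<integral>\<^sup>+t. \<integral>\<^sup>+u. h t \<partial>pair_pmf (binomial_pmf c q) (binomial_pmf d p)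
       \<partial>pair_pmf (binomial_pmf a q) (binomial_pmf b p))"
    by (intro nn_integral_mono antimonoD[OF assms(1)]) (simp add: less_eq_prod_def)
  finally show ?thesis
    by (simp add: measure_pmf.emeasure_space_1)
qed

lemma nn_integral_coop_trans_split_le:
  assumes "antimono h" "p \<in> {0..1}" "q \<in> {0..1}" "s\<^sub>1 + s\<^sub>2 \<le> s"
  shows "(\<integral>\<^sup>+t. h t \<partial>coop_trans p q s) \<le>
    (\<integral>\<^sup>+t\<^sub>1. \<integral>\<^sup>+t\<^sub>2. h (t\<^sub>1 + t\<^sub>2) \<partial>coop_trans p q s\<^sub>2 \<partial>coop_trans p q s\<^sub>1)"
proof -
  have "2 * (fst s\<^sub>1 + snd s\<^sub>1) + 2 * (fst s\<^sub>2 + snd s\<^sub>2) \<le> 2 * (fst s + snd s)"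
    "2 * min (fst s\<^sub>1) (snd s\<^sub>1) + 2 * min (fst s\<^sub>2) (snd s\<^sub>2) \<le> 2 * min (fst s) (snd s)"
    using assms(4) by (auto simp: less_eq_prod_def)
  from nn_integral_binomial_pair_antimono[OF assms(1-3) this]
  show ?thesis
    unfolding coop_trans_def nn_integral_binomial_pair_add[OF assms(2,3)] .
qed

definition coop_hit :: "real \<Rightarrow> real \<Rightarrow> nat \<Rightarrow> nat \<times> nat \<Rightarrow> ennreal" where
  "coop_hit p q n s = emeasure (coop_path p q n s) {xs. \<exists>z \<in> set xs. min (fst z) (snd z) = 0}"

lemma coop_hit_eq_coop_tau_le: "coop_hit p q n s = ennreal (coop_tau_le p q s n)"
  by (simp add: coop_hit_def coop_tau_le_def measure_pmf.emeasure_eq_measure)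

lemma coop_hit_0: "coop_hit p q 0 s = (if min (fst s) (snd s) = 0 then 1 else 0)"
  by (simp add: coop_hit_def)

lemma coop_hit_Suc:
  "coop_hit p q (Suc n) s =
    (if min (fst s) (snd s) = 0 then 1 else \<integral>\<^sup>+t. coop_hit p q n t \<partial>coop_trans p q s)"
proof (cases "min (fst s) (snd s) = 0")
  case True
  then show ?thesis
    by (simp add: coop_hit_def measure_pmf.emeasure_space_1)
next
  case False
  then have "Cons s -` {xs. \<exists>z \<in> set xs. min (fst z) (snd z) = 0} =
      {xs. \<exists>z \<in> set xs. min (fst z) (snd z) = 0}"
    by auto
  then show ?thesis
    unfolding if_not_P[OF False] coop_hit_def by (simp del: vimage_Collect_eq)
qed

lemma coop_hit_le_1: "coop_hit p q n s \<le> 1"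
  unfolding coop_hit_def by (rule measure_pmf.emeasure_le_1)

lemma coop_hit_absorbed: "min (fst s) (snd s) = 0 \<Longrightarrow> coop_hit p q n s = 1"
  by (cases n) (simp_all add: coop_hit_0 coop_hit_Suc)

lemma nn_integral_coop_hit_le_Suc:
  "(\<integral>\<^sup>+t. coop_hit p q n t \<partial>coop_trans p q s) \<le> coop_hit p q (Suc n) s"
proof -
  have "(\<integral>\<^sup>+t. coop_hit p q n t \<partial>coop_trans p q s) \<le> (\<integral>\<^sup>+t. 1 \<partial>coop_trans p q s)"
    by (intro nn_integral_mono coop_hit_le_1)
  then show ?thesis
    by (simp add: coop_hit_Suc measure_pmf.emeasure_space_1)
qed

lemma coop_hit_submult:
  assumes "p \<in> {0..1}" "q \<in> {0..1}" "s\<^sub>1 + s\<^sub>2 \<le> s"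
  shows "coop_hit p q n s \<le> coop_hit p q n s\<^sub>1 * coop_hit p q n s\<^sub>2"
  using assms(3)
proof (induction n arbitrary: s s\<^sub>1 s\<^sub>2)
  case 0
  then show ?case
    by (auto simp: coop_hit_0 less_eq_prod_def)
next
  case (Suc n)
  show ?case
  proof (cases "min (fst s) (snd s) = 0")
    case True
    with Suc.prems have "min (fst s\<^sub>1) (snd s\<^sub>1) = 0" "min (fst s\<^sub>2) (snd s\<^sub>2) = 0"
      by (auto simp: less_eq_prod_def)
    then show ?thesis
      by (simp add: coop_hit_absorbed coop_hit_le_1)
  next
    case False
    \<comment> \<open>Antitonicity is the case \<open>s\<^sub>2 = 0\<close> of the induction hypothesis.\<close>
    have "antimono (coop_hit p q n)"
    proof (rule antimonoI)
      fix u v :: "nat \<times> nat"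
      assume "u \<le> v"
      then have "coop_hit p q n v \<le> coop_hit p q n u * coop_hit p q n 0"
        by (intro Suc.IH) simp
      then show "coop_hit p q n v \<le> coop_hit p q n u"
        by (simp add: coop_hit_absorbed)
    qed
    then have "coop_hit p q (Suc n) s \<le>
        (\<integral>\<^sup>+t\<^sub>1. \<integral>\<^sup>+t\<^sub>2. coop_hit p q n (t\<^sub>1 + t\<^sub>2) \<partial>coop_trans p q s\<^sub>2 \<partial>coop_trans p q s\<^sub>1)"
      unfolding coop_hit_Suc if_not_P[OF False]
      using assms(1,2) Suc.prems by (rule nn_integral_coop_trans_split_le)
    also have "\<dots> \<le> (\<integral>\<^sup>+t\<^sub>1. \<integral>\<^sup>+t\<^sub>2. coop_hit p q n t\<^sub>1 * coop_hit p q n t\<^sub>2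
        \<partial>coop_trans p q s\<^sub>2 \<partial>coop_trans p q s\<^sub>1)"
      by (intro nn_integral_mono Suc.IH) simp
    also have "\<dots> = (\<integral>\<^sup>+t. coop_hit p q n t \<partial>coop_trans p q s\<^sub>1) *
        (\<integral>\<^sup>+t. coop_hit p q n t \<partial>coop_trans p q s\<^sub>2)"
      by (simp add: nn_integral_cmult nn_integral_multc)
    also have "\<dots> \<le> coop_hit p q (Suc n) s\<^sub>1 * coop_hit p q (Suc n) s\<^sub>2"
      by (intro mult_mono nn_integral_coop_hit_le_Suc) auto
    finally show ?thesis .
  qed
qed

lemma coop_hit_diag_le_power:
  assumes "p \<in> {0..1}" "q \<in> {0..1}"
  shows "coop_hit p q n (k, k) \<le> coop_hit p q n (1, 1) ^ k"
proof (induction k)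
  case 0
  then show ?case
    by (simp add: coop_hit_absorbed)
next
  case (Suc k)
  have "coop_hit p q n (Suc k, Suc k) \<le> coop_hit p q n (k, k) * coop_hit p q n (1, 1)"
    using assms by (intro coop_hit_submult) simp_all
  also have "\<dots> \<le> coop_hit p q n (1, 1) ^ k * coop_hit p q n (1, 1)"
    by (intro mult_right_mono Suc.IH) simp
  finally show ?case
    by (simp add: mult.commute)
qed

lemma coop_tau_le_le_power:
  assumes "p \<in> {0..1}" "q \<in> {0..1}" "min x y \<ge> N"
  shows "coop_tau_le p q (x, y) n \<le> coop_tau_le p q (1, 1) n ^ N"
proof -
  have "coop_hit p q n (x, y) \<le> coop_hit p q n (N, N) * coop_hit p q n (0, 0)"
    using assms by (intro coop_hit_submult) (simp_all add: less_eq_prod_def)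
  also have "\<dots> \<le> coop_hit p q n (1, 1) ^ N"
    using coop_hit_diag_le_power[OF assms(1,2)] by (simp add: coop_hit_absorbed)
  finally have "ennreal (coop_tau_le p q (x, y) n) \<le> ennreal (coop_tau_le p q (1, 1) n ^ N)"
    by (simp add: coop_hit_eq_coop_tau_le ennreal_power coop_tau_le_def)
  then show ?thesis
    by (simp add: ennreal_le_iff coop_tau_le_def)
qed

theorem mainTheorem11:
  fixes p q :: real and N x y :: nat
  assumes "0 < p" "p < 1" "0 < q" "q < 1" "N \<ge> 1" "min x y \<ge> N"
  shows "coop_tau_finite p q (x, y) \<le> coop_tau_finite p q (1, 1) ^ N"
proof -
  have bdd: "bdd_above (range (coop_tau_le p q s))" for s
    by (rule bdd_aboveI[of _ 1]) (auto simp: coop_tau_le_def)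
  have "coop_tau_le p q (x, y) n \<le> coop_tau_finite p q (1, 1) ^ N" for n
  proof -
    have "coop_tau_le p q (1, 1) n \<le> coop_tau_finite p q (1, 1)"
      unfolding coop_tau_finite_def by (rule cSUP_upper[OF _ bdd]) simp
    then have "coop_tau_le p q (1, 1) n ^ N \<le> coop_tau_finite p q (1, 1) ^ N"
      by (rule power_mono) (simp add: coop_tau_le_def)
    moreover have "coop_tau_le p q (x, y) n \<le> coop_tau_le p q (1, 1) n ^ N"
      using assms by (intro coop_tau_le_le_power) simp_all
    ultimately show ?thesis
      by linarith
  qed
  then show ?thesis
    unfolding coop_tau_finite_def by (intro cSUP_least) auto
qed

end
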